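(* Let $G$ be a finite graph, $k$ a positive integer, $uv\in E(G)$, and $c$ a $k$-colouring of $G$ such that some colour $i\in\{1,\dots,k\}$ does not appear under $c$ on the closed neighbourhood of $u$ nor on the closed neighbourhood of $v$. Then there exist a $k$-colouring $c_u$ differing from $c$ exactly at $u$ and a $k$-colouring $c_v$ differing from $c$ exactly at $v$ such that $c_u$ and $c_v$ have no common neighbour in $\mathcal{C}_k(G)$ other than $c$.
   Context: A $k$-colouring of $G$ is a map $c:V(G)\to\{1,\dots,k\}$ with $c(x)\neq c(y)$ for every edge $xy$. The $k$-recolouring graph $\mathcal{C}_k(G)$ has as vertices all $k$-colourings of $G$, two colourings being adjacent iff they differ at exactly one vertex of $G$. *)

theory Defs
  imports Main
begin

definition graph :: "'a set \<Rightarrow> ('a \<Rightarrow> 'a \<Rightarrow> bool) \<Rightarrow> bool" where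
  "graph V E \<longleftrightarrow> finite V \<and> (\<forall>x y. E x y \<longrightarrow> x \<in> V \<and> y \<in> V)
     \<and> (\<forall>x y. E x y \<longrightarrow> E y x) \<and> (\<forall>x. \<not> E x x)"

text \<open>A k-colouring c : V -> {1..k}, proper on edges. To make colourings
  (maps defined on V) correspond one-to-one to HOL functions, we fix the
  value 0 outside V.\<close>
definition colouring :: "'a set \<Rightarrow> ('a \<Rightarrow> 'a \<Rightarrow> bool) \<Rightarrow> nat \<Rightarrow> ('a \<Rightarrow> nat) \<Rightarrow> bool" where
  "colouring V E k c \<longleftrightarrow> (\<forall>x\<in>V. c x \<in> {1..k}) \<and> (\<forall>x. x \<notin> V \<longrightarrow> c x = 0)
     \<and> (\<forall>x y. E x y \<longrightarrow> c x \<noteq> c y)"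

definition closed_nbhd :: "('a \<Rightarrow> 'a \<Rightarrow> bool) \<Rightarrow> 'a \<Rightarrow> 'a set" where
  "closed_nbhd E u = insert u {x. E u x}"

definition recol_adj :: "'a set \<Rightarrow> ('a \<Rightarrow> 'a \<Rightarrow> bool) \<Rightarrow> nat \<Rightarrow> ('a \<Rightarrow> nat) \<Rightarrow> ('a \<Rightarrow> nat) \<Rightarrow> bool" where
  "recol_adj V E k c d \<longleftrightarrow> colouring V E k c \<and> colouring V E k d
     \<and> (\<exists>x. {y. c y \<noteq> d y} = {x})"

end

theory Submission
  imports Defs
begin

text \<open>Recolour u and v to the colour i that is missing around both of them. A common
  neighbour d of c(u := i) and c(v := i) must change one vertex of each; since these two
  colourings differ exactly on {u, v}, d either agrees with c (it undoes the change at u)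
  or gives both u and v the colour i, which is impossible because uv is an edge.\<close>

lemma colouring_fun_upd:
  assumes "graph V E" "colouring V E k c" "w \<in> V" "i \<in> {1..k}"
    and "i \<notin> c ` {y. E w y}"
  shows "colouring V E k (c(w := i))"
proof -
  have "c y \<noteq> i" if "E w y \<or> E y w" for y
    using assms(1,5) that unfolding graph_def by blast
  then show ?thesis
    using assms(2-4) unfolding colouring_def by auto
qed

lemma fun_upd_diff_set:
  assumes "c w \<noteq> i"
  shows "{x. (c(w := i)) x \<noteq> c x} = {w}"
  using assms by auto

lemma agree_off_singleton_diff_set:
  assumes "{y. f y \<noteq> g y} = {x}" "y \<noteq> x"
  shows "g y = f y"
proof -
  have "y \<notin> {y. f y \<noteq> g y}" using assms by simp
  then show ?thesis by simp
qed

lemma common_neighbour_of_fun_upds: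
  assumes "u \<noteq> v" "c u \<noteq> i" "c v \<noteq> i" "d u \<noteq> d v"
    and "\<exists>x. {y. (c(u := i)) y \<noteq> d y} = {x}"
    and "\<exists>z. {y. (c(v := i)) y \<noteq> d y} = {z}"
  shows "d = c"
proof -
  obtain x where x: "{y. (c(u := i)) y \<noteq> d y} = {x}" using assms(5) ..
  obtain z where z: "{y. (c(v := i)) y \<noteq> d y} = {z}" using assms(6) ..
  note off_x = agree_off_singleton_diff_set[OF x] and off_z = agree_off_singleton_diff_set[OF z]
  have "x = u"
  proof (rule ccontr)
    assume "x \<noteq> u"
    then have "d u = i" using off_x by simp
    then have "z = u" using off_z[of u] \<open>u \<noteq> v\<close> \<open>c u \<noteq> i\<close> by auto
    then have "d v = i" using off_z \<open>u \<noteq> v\<close> by simp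
    with \<open>d u = i\<close> \<open>d u \<noteq> d v\<close> show False by simp
  qed
  then have "d v = c v" using off_x \<open>u \<noteq> v\<close> by simp
  then have "z = v" using off_z[of v] \<open>c v \<noteq> i\<close> by auto
  then have "d u = c u" using off_z \<open>u \<noteq> v\<close> by simp
  show "d = c"
  proof
    fix y
    show "d y = c y"
      using \<open>d u = c u\<close> off_x \<open>x = u\<close> by (cases "y = u") simp_all
  qed
qed

theorem lemma2p3:
  fixes V :: "'a set" and E :: "'a \<Rightarrow> 'a \<Rightarrow> bool" and k :: nat
    and u v :: 'a and c :: "'a \<Rightarrow> nat" and i :: nat
  assumes "graph V E"
    and "k > 0"
    and "E u v"
    and "colouring V E k c"
    and "i \<in> {1..k}"
    and "i \<notin> c ` closed_nbhd E u"
    and "i \<notin> c ` closed_nbhd E v"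
  shows "\<exists>cu cv. colouring V E k cu \<and> {x. cu x \<noteq> c x} = {u}
             \<and> colouring V E k cv \<and> {x. cv x \<noteq> c x} = {v}
             \<and> (\<forall>d. recol_adj V E k cu d \<and> recol_adj V E k cv d \<longrightarrow> d = c)"
proof (intro exI conjI allI impI)
  have "u \<in> V" "v \<in> V" "u \<noteq> v"
    using assms(1,3) unfolding graph_def by blast+
  moreover have "c u \<noteq> i" "i \<notin> c ` {y. E u y}" "c v \<noteq> i" "i \<notin> c ` {y. E v y}"
    using assms(6,7) unfolding closed_nbhd_def by auto
  ultimately show "colouring V E k (c(u := i))" "colouring V E k (c(v := i))"
    and "{x. (c(u := i)) x \<noteq> c x} = {u}" "{x. (c(v := i)) x \<noteq> c x} = {v}"
    using assms(1,4,5) by (simp_all add: colouring_fun_upd fun_upd_diff_set)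
  fix d
  assume adj: "recol_adj V E k (c(u := i)) d \<and> recol_adj V E k (c(v := i)) d"
  then have "colouring V E k d"
    by (simp add: recol_adj_def)
  then have "d u \<noteq> d v"
    using assms(3) by (simp add: colouring_def)
  moreover have "\<exists>x. {y. (c(u := i)) y \<noteq> d y} = {x}" "\<exists>z. {y. (c(v := i)) y \<noteq> d y} = {z}"
    using adj by (simp_all add: recol_adj_def del: fun_upd_apply)
  ultimately show "d = c"
    by (rule common_neighbour_of_fun_upds[OF \<open>u \<noteq> v\<close> \<open>c u \<noteq> i\<close> \<open>c v \<noteq> i\<close>])
qed

end
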